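(* For all integers $k\ge1$ and $n\ge0$, \[ ov_k(n) = nov_k(n) - nov_{2k}(n). \]
   Context: An overpartition of $n$ is a non-increasing sequence of positive integers summing to $n$ in which the first occurrence of each integer may be overlined. For $j\ge1$, $nov_j(n)$ denotes the sum of all non-overlined parts divisible by $j$, summed over all overpartitions of $n$, and $ov_j(n)$ denotes the sum of all overlined parts divisible by $j$, summed over all overpartitions of $n$. *)

theory Defs
  imports Main "HOL-Library.Multiset"
begin

text \<open>An overpartition of n is represented as a multiset of parts (j, b), where j is a
positive integer and b is True iff this copy of j is overlined. Since only the first
occurrence of each integer may be overlined, each value j has at most one overlined
copy.\<close>

definition overpartitions :: "nat \<Rightarrow> (nat \<times> bool) multiset set" where
  "overpartitions n = {P. (\<forall>p \<in># P. fst p > 0) \<and> (\<forall>j. count P (j, True) \<le> 1)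
                          \<and> (\<Sum>p \<in># P. fst p) = n}"

definition nov :: "nat \<Rightarrow> nat \<Rightarrow> nat" where
  "nov j n = (\<Sum>P \<in> overpartitions n. \<Sum>p \<in># filter_mset (\<lambda>p. \<not> snd p \<and> j dvd fst p) P. fst p)"

definition ov :: "nat \<Rightarrow> nat \<Rightarrow> nat" where
  "ov j n = (\<Sum>P \<in> overpartitions n. \<Sum>p \<in># filter_mset (\<lambda>p. snd p \<and> j dvd fst p) P. fst p)"

end

theory Submission
  imports Defs
begin

text \<open>Fix m > 0. Replacing the a non-overlined copies of m by (a mod 2) overlined copies of m
and (a div 2) non-overlined copies of 2m, and conversely the overlined m and each
non-overlined 2m by one and two non-overlined copies of m, is an involution on the
overpartitions of n. It sends the number of non-overlined parts m to the number of overlined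
parts m plus twice the number of non-overlined parts 2m, so summing over all overpartitions
gives the same total for both quantities. Weighting these totals by m and summing over the
multiples m of k turns them into ov k n + nov (2k) n = nov k n.\<close>

lemma sum_mset_eq_sum_count:
  fixes f :: "'a \<Rightarrow> 'b::comm_semiring_1"
  assumes "finite A" "set_mset M \<subseteq> A"
  shows "(\<Sum>x\<in>#M. f x) = (\<Sum>x\<in>A. of_nat (count M x) * f x)"
  using assms(2)
proof (induction M)
  case empty
  then show ?case by simp
next
  case (add y M)
  have "(\<Sum>x\<in>A. of_nat (count (add_mset y M) x) * f x)
      = (\<Sum>x\<in>A. of_nat (count M x) * f x + (if x = y then f x else 0))"
    by (rule sum.cong) (auto simp: algebra_simps)
  also have "\<dots> = (\<Sum>x\<in>A. of_nat (count M x) * f x) + f y"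
    using add.prems assms(1) by (simp add: sum.distrib)
  finally show ?case using add by (simp add: add.commute)
qed

lemma overpartition_part_bounds:
  assumes "P \<in> overpartitions n" "p \<in># P"
  shows "0 < fst p" "fst p \<le> n"
proof -
  obtain P' where "P = add_mset p P'" using assms(2) by (metis multi_member_split)
  then show "0 < fst p" "fst p \<le> n" using assms(1) unfolding overpartitions_def by auto
qed

definition regroup :: "nat \<Rightarrow> (nat \<times> bool) multiset \<Rightarrow> (nat \<times> bool) multiset" where
  "regroup m P = filter_mset (\<lambda>p. p \<notin> {(m, False), (m, True), (2 * m, False)}) P
     + replicate_mset (count P (m, True) + 2 * count P (2 * m, False)) (m, False)
     + replicate_mset (count P (m, False) mod 2) (m, True)
     + replicate_mset (count P (m, False) div 2) (2 * m, False)"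

lemma count_regroup:
  assumes "m > 0"
  shows "count (regroup m P) p =
    (if p = (m, False) then count P (m, True) + 2 * count P (2 * m, False)
     else if p = (m, True) then count P (m, False) mod 2
     else if p = (2 * m, False) then count P (m, False) div 2
     else count P p)"
  using assms by (auto simp: regroup_def)

lemma regroup_regroup:
  assumes "m > 0" "count P (m, True) \<le> 1"
  shows "regroup m (regroup m P) = P"
  unfolding multiset_eq_iff using assms by (auto simp: count_regroup)

lemma sum_mset_fst_regroup:
  assumes "m > 0"
  shows "(\<Sum>p\<in>#regroup m P. fst p) = (\<Sum>p\<in>#P. fst p)"
proof -
  let ?A = "{(m, False), (m, True), (2 * m, False)}"
  let ?R = "(\<Sum>p\<in>#filter_mset (\<lambda>p. p \<notin> ?A) P. fst p)"
  have split_P: "P = filter_mset (\<lambda>p. p \<notin> ?A) P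
      + replicate_mset (count P (m, False)) (m, False)
      + replicate_mset (count P (m, True)) (m, True)
      + replicate_mset (count P (2 * m, False)) (2 * m, False)"
    unfolding multiset_eq_iff using assms by auto
  have "(\<Sum>p\<in>#P. fst p) = ?R + count P (m, False) * m + count P (m, True) * m
      + count P (2 * m, False) * (2 * m)"
    by (subst split_P) simp
  moreover have "(\<Sum>p\<in>#regroup m P. fst p) = ?R
      + (count P (m, True) + 2 * count P (2 * m, False)) * m
      + (count P (m, False) mod 2) * m + (count P (m, False) div 2) * (2 * m)"
    by (simp add: regroup_def)
  moreover have "(a mod 2) * m + (a div 2) * (2 * m) = a * m" for a :: nat
    by (metis mod_mult_div_eq distrib_right mult.assoc mult.commute)
  ultimately show ?thesis by (simp add: algebra_simps)
qed

lemma regroup_in_overpartitions: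
  assumes "m > 0" "P \<in> overpartitions n"
  shows "regroup m P \<in> overpartitions n"
proof -
  have "fst p > 0" if "p \<in># regroup m P" for p
    using that assms overpartition_part_bounds(1)[OF assms(2)]
    by (auto simp: count_regroup[OF assms(1)] simp flip: count_greater_zero_iff split: if_splits)
  moreover have "count (regroup m P) (j, True) \<le> 1" for j
    using assms unfolding overpartitions_def by (auto simp: count_regroup[OF assms(1)])
  ultimately show ?thesis
    using assms sum_mset_fst_regroup[OF assms(1), of P] unfolding overpartitions_def by auto
qed

lemma bij_betw_regroup:
  assumes "m > 0"
  shows "bij_betw (regroup m) (overpartitions n) (overpartitions n)"
  by (rule bij_betw_byWitness[where f' = "regroup m"])
     (use assms regroup_in_overpartitions regroup_regroup in \<open>auto simp: overpartitions_def\<close>)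

definition total_count :: "nat \<Rightarrow> nat \<times> bool \<Rightarrow> nat" where
  "total_count n p = (\<Sum>P\<in>overpartitions n. count P p)"

lemma total_count_overlined_add_double:
  assumes "m > 0"
  shows "total_count n (m, True) + 2 * total_count n (2 * m, False) = total_count n (m, False)"
proof -
  have "total_count n (m, False) = (\<Sum>P\<in>overpartitions n. count (regroup m P) (m, False))"
    unfolding total_count_def
    using sum.reindex_bij_betw[OF bij_betw_regroup[OF assms], of "\<lambda>P. count P (m, False)"]
    by simp
  also have "\<dots> = (\<Sum>P\<in>overpartitions n. count P (m, True) + 2 * count P (2 * m, False))"
    by (simp add: count_regroup[OF assms])
  finally show ?thesis
    by (simp add: total_count_def sum.distrib sum_distrib_left)
qed

lemma overpartition_sum_parts:
  assumes "P \<in> overpartitions n" "n \<le> N"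
  shows "(\<Sum>p\<in>#filter_mset (\<lambda>p. snd p = b \<and> j dvd fst p) P. fst p)
    = (\<Sum>m | m \<in> {1..N} \<and> j dvd m. m * count P (m, b))"
proof -
  let ?M = "{m. m \<in> {1..N} \<and> j dvd m}"
  have "set_mset (filter_mset (\<lambda>p. snd p = b \<and> j dvd fst p) P) \<subseteq> (\<lambda>m. (m, b)) ` ?M"
    using overpartition_part_bounds[OF assms(1)] assms(2) by force
  then have "(\<Sum>p\<in>#filter_mset (\<lambda>p. snd p = b \<and> j dvd fst p) P. fst p)
      = (\<Sum>p\<in>(\<lambda>m. (m, b)) ` ?M. count (filter_mset (\<lambda>p. snd p = b \<and> j dvd fst p) P) p * fst p)"
    by (subst sum_mset_eq_sum_count) auto
  also have "\<dots> = (\<Sum>m\<in>?M. m * count P (m, b))"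
    by (subst sum.reindex) (auto simp: inj_on_def mult.commute)
  finally show ?thesis .
qed

lemma sum_overpartitions_sum_parts:
  assumes "n \<le> N"
  shows "(\<Sum>P\<in>overpartitions n. \<Sum>p\<in>#filter_mset (\<lambda>p. snd p = b \<and> j dvd fst p) P. fst p)
    = (\<Sum>m | m \<in> {1..N} \<and> j dvd m. m * total_count n (m, b))"
  using overpartition_sum_parts[OF _ assms]
  by (simp add: total_count_def sum_distrib_left sum.swap[of _ _ "overpartitions n"])

lemma nov_eq_sum_total_count:
  "n \<le> N \<Longrightarrow> nov j n = (\<Sum>m | m \<in> {1..N} \<and> j dvd m. m * total_count n (m, False))"
  using sum_overpartitions_sum_parts[of n N False j] by (simp add: nov_def)

lemma ov_eq_sum_total_count:
  "ov j n = (\<Sum>m | m \<in> {1..n} \<and> j dvd m. m * total_count n (m, True))"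
  using sum_overpartitions_sum_parts[of n n True j] by (simp add: ov_def)

lemma ov_add_nov_double:
  "ov k n + nov (2 * k) n = nov k n"
proof -
  let ?M = "{m. m \<in> {1..n} \<and> k dvd m}"
  have "{m. m \<in> {1..2 * n} \<and> 2 * k dvd m} = (*) 2 ` ?M"
    by (auto simp: image_iff elim!: dvdE)
  then have "nov (2 * k) n = (\<Sum>m\<in>?M. 2 * m * total_count n (2 * m, False))"
    by (simp add: nov_eq_sum_total_count[of n "2 * n"] sum.reindex inj_on_def)
  then have "ov k n + nov (2 * k) n
      = (\<Sum>m\<in>?M. m * (total_count n (m, True) + 2 * total_count n (2 * m, False)))"
    by (simp add: ov_eq_sum_total_count sum.distrib algebra_simps)
  also have "\<dots> = nov k n"
    by (simp add: total_count_overlined_add_double nov_eq_sum_total_count[of n n])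
  finally show ?thesis .
qed

theorem mainTheorem3:
  fixes k n :: nat
  assumes "k \<ge> 1"
  shows "int (ov k n) = int (nov k n) - int (nov (2 * k) n)"
  using ov_add_nov_double[of k n] by linarith

end
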